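(* For every $d\in(0,1]$ there is $\varepsilon_0>0$ such that for every $\varepsilon\in(0,\varepsilon_0]$ there is $r_0$ such that for every $r\ge r_0$ there is $\zeta_0>0$ such that for every $\zeta\in(0,\zeta_0]$ there is $n_0$ such that the following holds for all $n\ge n_0$. Let $G$ be an $n$-vertex graph with a partition $V(G)=V_1\sqcup\dots\sqcup V_r$ satisfying $\big||V_i|-|V_j|\big|\le1$ for all $i,j$, and let $R$ be the $(\varepsilon,d)$-reduced graph of $G$ with respect to this partition. Suppose $R$ is connected and non-bipartite. Then there is an odd integer $L\le 2r$ such that for all $i,j\in V(R)$ (not necessarily distinct) and all sets $X\subseteq V_i$ with $|X|\ge d|V_i|$ and $Y\subseteq V_j$ with $|Y|\ge d|V_j|$, $G$ contains at least $\zeta n^{L+1}$ paths of length $L$ starting in $X$ and ending in $Y$.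
   Context: For nonempty disjoint vertex sets $X,Y$ of a graph $G$, the density is $d_G(X,Y)=e_G(X,Y)/(|X||Y|)$. A pair $(A,B)$ of disjoint nonempty vertex sets is $\varepsilon$-regular if $|d_G(A,B)-d_G(A',B')|\le\varepsilon$ for all $A'\subseteq A$, $B'\subseteq B$ with $|A'|\ge\varepsilon|A|$, $|B'|\ge\varepsilon|B|$. Given a partition $V(G)=V_1\sqcup\dots\sqcup V_r$, the $(\varepsilon,d)$-reduced graph $R$ has vertex set $[r]$, with $ij\in E(R)$ iff $(V_i,V_j)$ is $\varepsilon$-regular of density at least $d$. The length of a path is its number of edges; paths are counted as sequences of distinct vertices. *)

theory Defs
  imports Main Complex_Main
begin

definition is_graph :: "nat \<Rightarrow> (nat \<Rightarrow> nat \<Rightarrow> bool) \<Rightarrow> bool" where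
  "is_graph n E \<longleftrightarrow> (\<forall>x y. E x y \<longrightarrow> x < n \<and> y < n \<and> x \<noteq> y \<and> E y x)"

definition edges_between :: "(nat \<Rightarrow> nat \<Rightarrow> bool) \<Rightarrow> nat set \<Rightarrow> nat set \<Rightarrow> nat" where
  "edges_between E X Y = card {(x, y). x \<in> X \<and> y \<in> Y \<and> E x y}"

definition density :: "(nat \<Rightarrow> nat \<Rightarrow> bool) \<Rightarrow> nat set \<Rightarrow> nat set \<Rightarrow> real" where
  "density E X Y = real (edges_between E X Y) / (real (card X) * real (card Y))"

definition regular_pair :: "(nat \<Rightarrow> nat \<Rightarrow> bool) \<Rightarrow> real \<Rightarrow> nat set \<Rightarrow> nat set \<Rightarrow> bool" where
  "regular_pair E \<epsilon> A B \<longleftrightarrow>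
     (\<forall>A' B'. A' \<subseteq> A \<and> B' \<subseteq> B \<and> real (card A') \<ge> \<epsilon> * real (card A)
        \<and> real (card B') \<ge> \<epsilon> * real (card B)
        \<longrightarrow> \<bar>density E A B - density E A' B'\<bar> \<le> \<epsilon>)"

definition reduced_graph ::
  "(nat \<Rightarrow> nat \<Rightarrow> bool) \<Rightarrow> (nat \<Rightarrow> nat set) \<Rightarrow> nat \<Rightarrow> real \<Rightarrow> real \<Rightarrow> nat \<Rightarrow> nat \<Rightarrow> bool" where
  "reduced_graph E V r \<epsilon> d i j \<longleftrightarrow> i < r \<and> j < r \<and> i \<noteq> j \<and>
     regular_pair E \<epsilon> (V i) (V j) \<and> density E (V i) (V j) \<ge> d"

definition connected_on :: "nat \<Rightarrow> (nat \<Rightarrow> nat \<Rightarrow> bool) \<Rightarrow> bool" where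
  "connected_on r R \<longleftrightarrow> (\<forall>i<r. \<forall>j<r. R\<^sup>*\<^sup>* i j)"

definition bipartite_on :: "nat \<Rightarrow> (nat \<Rightarrow> nat \<Rightarrow> bool) \<Rightarrow> bool" where
  "bipartite_on r R \<longleftrightarrow> (\<exists>f :: nat \<Rightarrow> bool. \<forall>i<r. \<forall>j<r. R i j \<longrightarrow> f i \<noteq> f j)"

definition paths_between :: "nat \<Rightarrow> (nat \<Rightarrow> nat \<Rightarrow> bool) \<Rightarrow> nat \<Rightarrow> nat set \<Rightarrow> nat set \<Rightarrow> nat list set" where
  "paths_between n E L X Y = {p. length p = L + 1 \<and> distinct p \<and> set p \<subseteq> {..<n}
      \<and> (\<forall>k<L. E (p ! k) (p ! Suc k)) \<and> hd p \<in> X \<and> last p \<in> Y}"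

end

theory Submission
  imports Defs
begin

text \<open>Connectivity and non-bipartiteness of the reduced graph \<open>R\<close> give an odd closed walk, and
  hence a walk \<open>w\<^sub>0 = i, \<dots>, w\<^sub>L = j\<close> in \<open>R\<close> of the common odd length \<open>L = 2 r - 1\<close> between any
  two clusters. Working backwards from \<open>Y\<close>, let \<open>Z\<^sub>L = Y\<close> and let \<open>Z\<^sub>k\<close> be the vertices of
  \<open>V\<^bsub>w\<^sub>k\<^esub>\<close> with at least \<open>(d - \<epsilon>) |Z\<^sub>k\<^sub>+\<^sub>1|\<close> neighbours in \<open>Z\<^sub>k\<^sub>+\<^sub>1\<close>; \<open>\<epsilon>\<close>-regularity makes
  each \<open>Z\<^sub>k\<close> (\<open>k < L\<close>) contain all but \<open>\<epsilon> |V\<^bsub>w\<^sub>k\<^esub>|\<close> vertices, so \<open>X \<inter> Z\<^sub>0\<close> is large. Choosing the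
  path greedily from \<open>X \<inter> Z\<^sub>0\<close> through \<open>Z\<^sub>1, \<dots>, Z\<^sub>L\<close> leaves \<open>\<Omega>(d\<^sup>2 n / r)\<close> choices at every step,
  even after discarding the at most \<open>2 r\<close> vertices already used, which gives \<open>\<Omega>(n\<^sup>L\<^sup>+\<^sup>1)\<close> paths.\<close>

section \<open>Walks of prescribed parity\<close>

lemma symp_relpowp:
  assumes "symp R"
  shows "symp (R ^^ n)"
proof (induction n)
  case 0
  show ?case by (simp add: symp_def)
next
  case (Suc n)
  show ?case
  proof (rule sympI)
    fix x z
    assume "(R ^^ Suc n) x z"
    then obtain y where "(R ^^ n) x y" "R y z" by (rule relpowp_Suc_E)
    then show "(R ^^ Suc n) z x"
      using Suc.IH assms by (blast intro: relpowp_Suc_I2 dest: sympD)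
  qed
qed

lemma relpowp_segment:
  assumes "\<forall>i<k. R (f i) (f (Suc i))" "p \<le> q" "q \<le> k"
  shows "(R ^^ (q - p)) (f p) (f q)"
  unfolding relpowp_fun_conv
  by (rule exI[of _ "\<lambda>i. f (p + i)"]) (use assms in auto)

lemma relpowp_shortcut:
  assumes walk: "\<forall>i<k. R (f i) (f (Suc i))" and "p < q" "q \<le> k" "f p = f q"
  shows "(R ^^ (k - (q - p))) (f 0) (f k)"
proof -
  have "(R ^^ p) (f 0) (f p)" "(R ^^ (k - q)) (f q) (f k)"
    using relpowp_segment[of k R f 0 p] relpowp_segment[of k R f q k] walk \<open>p < q\<close> \<open>q \<le> k\<close> by simp_all
  then have "(R ^^ (p + (k - q))) (f 0) (f k)"
    using \<open>f p = f q\<close> by (auto intro: relpowp_trans)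
  moreover have "p + (k - q) = k - (q - p)" using assms by simp
  ultimately show ?thesis by simp
qed

lemma relpowp_short_same_parity:
  assumes "finite S" "S \<noteq> {}" and field: "\<And>x y. R x y \<Longrightarrow> x \<in> S \<and> y \<in> S"
    and "(R ^^ k) a b"
  shows "\<exists>k' < 2 * card S. even k' = even k \<and> (R ^^ k') a b"
  using assms(4)
proof (induction k rule: less_induct)
  case (less k)
  show ?case
  proof (cases "k < 2 * card S")
    case True
    with less.prems show ?thesis by blast
  next
    case False
    obtain f where f: "f 0 = a" "f k = b" and walk: "\<forall>i<k. R (f i) (f (Suc i))"
      using less.prems unfolding relpowp_fun_conv by blast
    have "0 < k" using False assms(1,2) by (metis card_gt_0_iff mult_pos_pos not_gr0 zero_less_numeral)
    have in_S: "f m \<in> S" if "m \<le> k" for m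
    proof (cases "m < k")
      case True
      then show ?thesis using walk field by blast
    next
      case False
      with that have "m = k" by simp
      moreover have "R (f (k - 1)) (f k)" using walk[rule_format, of "k - 1"] \<open>0 < k\<close> by simp
      ultimately show ?thesis using field by blast
    qed
    \<comment> \<open>a walk of length at least \<open>2 |S|\<close> repeats a vertex at two times of equal parity\<close>
    have "(\<lambda>m. (f m, even m)) ` {..k} \<subseteq> S \<times> UNIV" using in_S by auto
    then have "card ((\<lambda>m. (f m, even m)) ` {..k}) \<le> card (S \<times> (UNIV :: bool set))"
      using assms(1) by (intro card_mono) auto
    then have "\<not> inj_on (\<lambda>m. (f m, even m)) {..k}"
      using False by (auto simp: card_cartesian_product dest: card_image)
    then obtain p q where pq: "p < q" "q \<le> k" "f p = f q" "even p = even q"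
      unfolding inj_on_def by (metis atMost_iff linorder_neqE_nat prod.inject)
    then have "(R ^^ (k - (q - p))) a b"
      using relpowp_shortcut[of k R f] walk f by metis
    moreover have "even (k - (q - p)) = even k" using pq by auto
    ultimately show ?thesis using less.IH[of "k - (q - p)"] pq by auto
  qed
qed

lemma relpowp_add_even:
  assumes "symp R" "(R ^^ k) a b" "0 < k"
  shows "(R ^^ (k + 2 * t)) a b"
proof -
  obtain y where "R y b"
    using assms(2,3) by (metis Suc_pred relpowp_Suc_E)
  then have "(R ^^ 2) b b"
    using assms(1) by (auto simp: numeral_2_eq_2 intro: relpowp_Suc_I2 dest: sympD)
  then have "(R ^^ (2 * t)) b b"
    by (induction t) (auto dest: relpowp_trans)
  with assms(2) show ?thesis by (rule relpowp_trans)
qed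

lemma odd_closed_walk_if_not_bipartite:
  assumes sym: "symp R" and conn: "connected_on r R" and nbip: "\<not> bipartite_on r R"
    and "a < r"
  shows "\<exists>c. odd c \<and> (R ^^ c) a a"
proof (rule ccontr)
  assume no_odd: "\<nexists>c. odd c \<and> (R ^^ c) a a"
  define f where "f i \<longleftrightarrow> (\<exists>k. even k \<and> (R ^^ k) a i)" for i
  have "f i \<noteq> f j" if "i < r" "j < r" "R i j" for i j
  proof
    assume "f i = f j"
    obtain k l where walks: "(R ^^ k) a i" "(R ^^ l) a j" and "even k = even l"
    proof (cases "f i")
      case True
      with \<open>f i = f j\<close> show ?thesis using that unfolding f_def by blast
    next
      case False
      obtain k l where "(R ^^ k) a i" "(R ^^ l) a j"
        using conn \<open>a < r\<close> \<open>i < r\<close> \<open>j < r\<close> unfolding connected_on_def rtranclp_power by blast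
      moreover from this have "odd k" "odd l"
        using False \<open>f i = f j\<close> unfolding f_def by blast+
      ultimately show ?thesis using that by auto
    qed
    have "(R ^^ l) j a" using symp_relpowp[OF sym] walks(2) by (rule sympD)
    with relpowp_Suc_I[OF walks(1) \<open>R i j\<close>] have "(R ^^ (Suc k + l)) a a"
      by (rule relpowp_trans)
    moreover have "odd (Suc k + l)" using \<open>even k = even l\<close> by simp
    ultimately show False using no_odd by blast
  qed
  with nbip show False unfolding bipartite_on_def by blast
qed

text \<open>A closed odd walk makes every pair of vertices joined by walks of both parities;
  shortening and padding by back-and-forth steps then fixes the length at \<open>2 r - 1\<close>.\<close>
lemma walk_of_length_2r_minus_1:
  assumes sym: "symp R" and field: "\<And>x y. R x y \<Longrightarrow> x < r \<and> y < r"
    and conn: "connected_on r R" and nbip: "\<not> bipartite_on r R" and "i < r" "j < r"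
  shows "(R ^^ (2 * r - 1)) i j"
proof -
  obtain c where "odd c" "(R ^^ c) i i"
    using odd_closed_walk_if_not_bipartite[OF sym conn nbip \<open>i < r\<close>] by blast
  obtain k where "(R ^^ k) i j"
    using conn \<open>i < r\<close> \<open>j < r\<close> unfolding connected_on_def rtranclp_power by blast
  have "\<exists>k. odd k \<and> (R ^^ k) i j"
  proof (cases "odd k")
    case False
    with \<open>odd c\<close> have "odd (c + k)" by simp
    then show ?thesis using relpowp_trans[OF \<open>(R ^^ c) i i\<close> \<open>(R ^^ k) i j\<close>] by blast
  qed (use \<open>(R ^^ k) i j\<close> in blast)
  then obtain k' where k': "k' < 2 * r" "odd k'" "(R ^^ k') i j"
    using relpowp_short_same_parity[of "{..<r}" R] field \<open>i < r\<close>
    by (metis card_lessThan empty_iff finite_lessThan lessThan_iff)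
  then have "(R ^^ (k' + 2 * ((2 * r - 1 - k') div 2))) i j"
    using relpowp_add_even[OF sym] by (metis odd_pos)
  moreover have "k' + 2 * ((2 * r - 1 - k') div 2) = 2 * r - 1"
    using k' by (auto elim!: oddE)
  ultimately show ?thesis by simp
qed

section \<open>Regular pairs\<close>

lemma edges_between_commute:
  assumes "is_graph n E"
  shows "edges_between E A B = edges_between E B A"
proof -
  have "{(x, y). x \<in> B \<and> y \<in> A \<and> E x y} = prod.swap ` {(x, y). x \<in> A \<and> y \<in> B \<and> E x y}"
    using assms unfolding is_graph_def by (auto simp: image_iff)
  then show ?thesis
    unfolding edges_between_def by (simp add: card_image swap_inj_on)
qed

lemma density_commute: "is_graph n E \<Longrightarrow> density E A B = density E B A"
  unfolding density_def by (simp add: edges_between_commute mult.commute)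

lemma regular_pair_commute: "is_graph n E \<Longrightarrow> regular_pair E \<epsilon> A B \<Longrightarrow> regular_pair E \<epsilon> B A"
  unfolding regular_pair_def by (metis density_commute)

lemma symp_reduced_graph: "is_graph n E \<Longrightarrow> symp (reduced_graph E V r \<epsilon> d)"
  unfolding reduced_graph_def by (intro sympI) (metis regular_pair_commute density_commute)

lemma edges_between_eq_sum:
  assumes "finite X" "finite Y"
  shows "edges_between E X Y = (\<Sum>x\<in>X. card {y \<in> Y. E x y})"
proof -
  have "{(x, y). x \<in> X \<and> y \<in> Y \<and> E x y} = Sigma X (\<lambda>x. {y \<in> Y. E x y})" by auto
  then show ?thesis unfolding edges_between_def using assms by simp
qed

text \<open>The vertices of \<open>A\<close> with fewer than \<open>(d - \<epsilon>) |Y|\<close> neighbours in \<open>Y\<close> form a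
  set whose density to \<open>Y\<close> is below \<open>d - \<epsilon>\<close>, so regularity forbids it from having
  \<open>\<epsilon> |A|\<close> elements.\<close>
lemma regular_pair_most_vertices_high_degree:
  assumes reg: "regular_pair E \<epsilon> A B" and dens: "d \<le> density E A B"
    and "finite A" "finite B" "0 \<le> \<epsilon>"
    and Y: "Y \<subseteq> B" "\<epsilon> * card B \<le> card Y" "Y \<noteq> {}"
  shows "(1 - \<epsilon>) * card A \<le> card {a \<in> A. (d - \<epsilon>) * card Y \<le> card {y \<in> Y. E a y}}"
    (is "_ \<le> real (card ?high)")
proof -
  define low where "low = A - ?high"
  have "finite Y" "finite low" using Y \<open>finite A\<close> \<open>finite B\<close> finite_subset
    unfolding low_def by auto
  have "card low \<le> \<epsilon> * card A"
  proof (rule ccontr)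
    assume "\<not> card low \<le> \<epsilon> * card A"
    then have big: "\<epsilon> * card A < card low" by simp
    moreover have "0 \<le> \<epsilon> * card A" using \<open>0 \<le> \<epsilon>\<close> by simp
    ultimately have "low \<noteq> {}" by auto
    have "edges_between E low Y = (\<Sum>x\<in>low. real (card {y \<in> Y. E x y}))"
      using edges_between_eq_sum[OF \<open>finite low\<close> \<open>finite Y\<close>] by simp
    also have "\<dots> < (\<Sum>x\<in>low. (d - \<epsilon>) * card Y)"
      using \<open>finite low\<close> \<open>low \<noteq> {}\<close> by (intro sum_strict_mono) (auto simp: low_def)
    also have "\<dots> = (d - \<epsilon>) * (card low * card Y)" by simp
    finally have "density E low Y < d - \<epsilon>"
      using \<open>finite low\<close> \<open>low \<noteq> {}\<close> \<open>finite Y\<close> \<open>Y \<noteq> {}\<close>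
      unfolding density_def by (simp add: divide_less_eq card_gt_0_iff)
    moreover have "\<bar>density E A B - density E low Y\<bar> \<le> \<epsilon>"
      using reg Y big unfolding regular_pair_def low_def by auto
    ultimately show False using dens by linarith
  qed
  moreover have "card A = card ?high + card low"
    using \<open>finite A\<close> card_Un_disjoint[of ?high low] unfolding low_def
    by (simp add: Un_absorb1)
  ultimately show ?thesis by (simp add: algebra_simps)
qed

section \<open>Greedy counting of paths\<close>

definition layered_paths :: "(nat \<Rightarrow> nat \<Rightarrow> bool) \<Rightarrow> (nat \<Rightarrow> nat set) \<Rightarrow> nat \<Rightarrow> nat list set" where
  "layered_paths E S m = {p. length p = Suc m \<and> distinct p \<and> (\<forall>k\<le>m. p ! k \<in> S k)
      \<and> (\<forall>k<m. E (p ! k) (p ! Suc k))}"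

lemma set_layered_path:
  assumes "p \<in> layered_paths E S m"
  shows "set p \<subseteq> (\<Union>k\<le>m. S k)"
proof
  fix x assume "x \<in> set p"
  then obtain k where "k < length p" "x = p ! k" by (metis in_set_conv_nth)
  with assms have "k \<le> m" "x \<in> S k" unfolding layered_paths_def by auto
  then show "x \<in> (\<Union>k\<le>m. S k)" by blast
qed

lemma finite_layered_paths:
  assumes "\<forall>k\<le>m. finite (S k)"
  shows "finite (layered_paths E S m)"
proof (rule finite_subset)
  show "layered_paths E S m \<subseteq> {p. set p \<subseteq> (\<Union>k\<le>m. S k) \<and> length p = Suc m}"
  proof
    fix p assume p: "p \<in> layered_paths E S m"
    with set_layered_path[OF p] show "p \<in> {p. set p \<subseteq> (\<Union>k\<le>m. S k) \<and> length p = Suc m}"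
      unfolding layered_paths_def by simp
  qed
  show "finite {p. set p \<subseteq> (\<Union>k\<le>m. S k) \<and> length p = Suc m}"
    using assms by (intro finite_lists_length_eq) auto
qed

lemma card_layered_paths_0: "card (layered_paths E S 0) = card (S 0)"
proof -
  have "layered_paths E S 0 = (\<lambda>x. [x]) ` S 0"
    unfolding layered_paths_def by (auto simp: length_Suc_conv)
  then show ?thesis by (simp add: card_image inj_on_def)
qed

lemma hd_last_layered_path:
  assumes "p \<in> layered_paths E S m"
  shows "hd p = p ! 0" "last p = p ! m"
proof -
  have "length p = Suc m" using assms unfolding layered_paths_def by simp
  then have "p \<noteq> []" by auto
  with \<open>length p = Suc m\<close> show "hd p = p ! 0" "last p = p ! m"
    by (simp_all add: hd_conv_nth last_conv_nth)
qed

lemma append_layered_path: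
  assumes p: "p \<in> layered_paths E S m" and y: "y \<in> S (Suc m)" "E (last p) y" "y \<notin> set p"
  shows "p @ [y] \<in> layered_paths E S (Suc m)"
proof -
  have len: "length p = Suc m" and layers: "\<forall>k\<le>m. p ! k \<in> S k"
    and edges: "\<forall>k<m. E (p ! k) (p ! Suc k)" and "distinct p"
    using p unfolding layered_paths_def by auto
  have "(p @ [y]) ! k \<in> S k" if "k \<le> Suc m" for k
    using that len layers y by (cases "k = Suc m") (auto simp: nth_append)
  moreover have "E ((p @ [y]) ! k) ((p @ [y]) ! Suc k)" if "k < Suc m" for k
    using that len edges y hd_last_layered_path(2)[OF p] by (cases "k = m") (auto simp: nth_append)
  ultimately show ?thesis
    using len \<open>distinct p\<close> y unfolding layered_paths_def by auto
qed

text \<open>A path ending at \<open>a \<in> S m\<close> extends along any neighbour of \<open>a\<close> in \<open>S (Suc m)\<close> that it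
  does not already visit, and it visits only \<open>m + 1\<close> vertices.\<close>
lemma card_layered_paths_Suc:
  fixes K :: real
  assumes fin: "\<forall>k\<le>Suc m. finite (S k)"
    and deg: "\<forall>a\<in>S m. K \<le> card {y \<in> S (Suc m). E a y}"
  shows "card (layered_paths E S m) * (K - Suc m) \<le> card (layered_paths E S (Suc m))"
proof -
  define P where "P = layered_paths E S m"
  define F where "F p = {y \<in> S (Suc m). E (last p) y} - set p" for p
  have "K - Suc m \<le> card (F p)" if "p \<in> P" for p
  proof -
    have p: "length p = Suc m" "distinct p" "last p \<in> S m"
      using that hd_last_layered_path(2)[of p] unfolding P_def layered_paths_def by auto
    have "card {y \<in> S (Suc m). E (last p) y} - card (set p) \<le> card (F p)"
      unfolding F_def by (rule diff_card_le_card_Diff) simp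
    then have "card {y \<in> S (Suc m). E (last p) y} \<le> card (F p) + Suc m"
      using p by (simp add: distinct_card)
    then have "real (card {y \<in> S (Suc m). E (last p) y}) \<le> card (F p) + real (Suc m)"
      by (metis of_nat_add of_nat_le_iff)
    moreover have "K \<le> card {y \<in> S (Suc m). E (last p) y}" using deg p by blast
    ultimately show ?thesis by linarith
  qed
  then have "card P * (K - Suc m) \<le> (\<Sum>p\<in>P. real (card (F p)))"
    using sum_mono[of P "\<lambda>_. K - Suc m"] by simp
  also have "\<dots> = card (Sigma P F)"
    using fin finite_layered_paths[of m S E] unfolding P_def F_def by simp
  also have "card (Sigma P F) \<le> card (layered_paths E S (Suc m))"
  proof (rule card_inj_on_le)
    show "inj_on (\<lambda>(p, y). p @ [y]) (Sigma P F)" by (auto simp: inj_on_def)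
    show "(\<lambda>(p, y). p @ [y]) ` Sigma P F \<subseteq> layered_paths E S (Suc m)"
      unfolding P_def F_def using append_layered_path by auto
    show "finite (layered_paths E S (Suc m))" using fin by (rule finite_layered_paths)
  qed
  finally show ?thesis unfolding P_def by simp
qed

lemma card_layered_paths:
  fixes K :: real
  assumes fin: "\<forall>k\<le>L. finite (S k)"
    and deg: "\<forall>k<L. \<forall>a\<in>S k. K \<le> card {y \<in> S (Suc k). E a y}" and "L \<le> K"
  shows "card (S 0) * (K - L) ^ L \<le> card (layered_paths E S L)"
proof -
  have "m \<le> L \<Longrightarrow> card (S 0) * (K - L) ^ m \<le> card (layered_paths E S m)" for m
  proof (induction m)
    case 0
    show ?case by (simp add: card_layered_paths_0)
  next
    case (Suc m)
    have "card (S 0) * (K - L) ^ Suc m = card (S 0) * (K - L) ^ m * (K - L)" by simp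
    also have "\<dots> \<le> card (layered_paths E S m) * (K - L)"
      using Suc \<open>L \<le> K\<close> by (intro mult_right_mono) auto
    also have "\<dots> \<le> card (layered_paths E S m) * (K - Suc m)"
      using Suc.prems by (intro mult_left_mono) auto
    also have "\<dots> \<le> card (layered_paths E S (Suc m))"
      using Suc.prems fin deg by (intro card_layered_paths_Suc) auto
    finally show ?case .
  qed
  then show ?thesis by simp
qed

lemma finite_paths_between: "finite (paths_between n E L X Y)"
proof (rule finite_subset)
  show "paths_between n E L X Y \<subseteq> {p. set p \<subseteq> {..<n} \<and> length p = L + 1}"
    unfolding paths_between_def by blast
  show "finite {p. set p \<subseteq> {..<n} \<and> length p = L + 1}"
    by (rule finite_lists_length_eq) simp
qed

lemma layered_paths_subset_paths_between:
  assumes "\<forall>k\<le>L. S k \<subseteq> {..<n}"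
  shows "layered_paths E S L \<subseteq> paths_between n E L (S 0) (S L)"
proof
  fix p assume p: "p \<in> layered_paths E S L"
  then have "set p \<subseteq> {..<n}" using set_layered_path assms by blast
  moreover note hd_last_layered_path[OF p]
  ultimately show "p \<in> paths_between n E L (S 0) (S L)"
    using p unfolding layered_paths_def paths_between_def by auto
qed

lemma card_paths_between_ge_layered:
  fixes K :: real
  assumes "\<forall>k\<le>L. S k \<subseteq> {..<n}"
    and "\<forall>k<L. \<forall>a\<in>S k. K \<le> card {y \<in> S (Suc k). E a y}" and "L \<le> K"
    and "S 0 \<subseteq> X" "S L \<subseteq> Y"
  shows "card (S 0) * (K - L) ^ L \<le> card (paths_between n E L X Y)"
proof -
  have "card (S 0) * (K - L) ^ L \<le> card (layered_paths E S L)"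
    using assms(1-3) by (intro card_layered_paths) (auto intro: finite_subset)
  also have "paths_between n E L (S 0) (S L) \<subseteq> paths_between n E L X Y"
    using assms(4,5) unfolding paths_between_def by auto
  with layered_paths_subset_paths_between[OF assms(1)]
  have "layered_paths E S L \<subseteq> paths_between n E L X Y" by (rule order_trans)
  then have "card (layered_paths E S L) \<le> card (paths_between n E L X Y)"
    by (rule card_mono[OF finite_paths_between])
  finally show ?thesis by simp
qed

section \<open>Paths along a chain of regular pairs\<close>

lemma card_Int_ge:
  assumes "finite U" "A \<subseteq> U" "B \<subseteq> U"
  shows "card A + card B \<le> card U + card (A \<inter> B)"
proof -
  have "card A + card B = card (A \<union> B) + card (A \<inter> B)"
    using assms by (intro card_Un_Int) (auto intro: finite_subset)
  moreover have "card (A \<union> B) \<le> card U" using assms by (intro card_mono) auto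
  ultimately show ?thesis by simp
qed

primrec dense_layers ::
  "(nat \<Rightarrow> nat \<Rightarrow> bool) \<Rightarrow> (nat \<Rightarrow> nat set) \<Rightarrow> real \<Rightarrow> nat set \<Rightarrow> nat \<Rightarrow> nat set" where
  "dense_layers E U c Y 0 = Y"
| "dense_layers E U c Y (Suc k) = {a \<in> U (Suc k).
     c * card (dense_layers E U c Y k) \<le> card {y \<in> dense_layers E U c Y k. E a y}}"

lemma dense_layers_subset: "Y \<subseteq> U 0 \<Longrightarrow> dense_layers E U c Y k \<subseteq> U k"
  by (cases k) auto

lemma card_dense_layers:
  assumes chain: "\<And>k. k < L \<Longrightarrow> regular_pair E \<epsilon> (U (Suc k)) (U k) \<and> d \<le> density E (U (Suc k)) (U k)"
    and U: "\<And>k. k \<le> L \<Longrightarrow> finite (U k) \<and> U k \<noteq> {}"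
    and d: "0 < d" "d \<le> 1" and \<epsilon>: "0 < \<epsilon>" "\<epsilon> \<le> d / 4"
    and Y: "Y \<subseteq> U 0" "d * card (U 0) \<le> card Y"
  shows "k \<le> L \<Longrightarrow> (if k = 0 then d else 1 - \<epsilon>) * card (U k) \<le> card (dense_layers E U (d - \<epsilon>) Y k)"
proof (induction k)
  case 0
  with Y show ?case by simp
next
  case (Suc k)
  define Z where "Z = dense_layers E U (d - \<epsilon>) Y k"
  define c where "c = (if k = 0 then d else 1 - \<epsilon>)"
  have "\<epsilon> \<le> c" "0 < c" using d \<epsilon> unfolding c_def by auto
  have Z: "c * card (U k) \<le> card Z" "Z \<subseteq> U k"
    using Suc dense_layers_subset[of Y U] Y(1) unfolding Z_def c_def by auto
  then have "\<epsilon> * card (U k) \<le> card Z"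
    using \<open>\<epsilon> \<le> c\<close> by (meson mult_right_mono of_nat_0_le_iff order_trans)
  moreover have "0 < c * card (U k)"
    using \<open>0 < c\<close> U[of k] Suc.prems by (simp add: card_gt_0_iff)
  with Z have "Z \<noteq> {}" by auto
  ultimately have "(1 - \<epsilon>) * card (U (Suc k))
      \<le> card {a \<in> U (Suc k). (d - \<epsilon>) * card Z \<le> card {y \<in> Z. E a y}}"
    using chain[of k] U[of k] U[of "Suc k"] Suc.prems \<epsilon> Z(2)
    by (intro regular_pair_most_vertices_high_degree) auto
  then show ?case unfolding Z_def by simp
qed

text \<open>Paths are built greedily from \<open>X \<inter> Z L\<close> through the layers \<open>Z (L - 1), \<dots>, Z 0 = Y\<close>,
  where \<open>Z = dense_layers E U (d - \<epsilon>) Y\<close>.\<close>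
lemma card_paths_between_regular_chain:
  fixes d \<epsilon> t :: real
  assumes chain: "\<And>k. k < L \<Longrightarrow> regular_pair E \<epsilon> (U (Suc k)) (U k) \<and> d \<le> density E (U (Suc k)) (U k)"
    and U: "\<And>k. k \<le> L \<Longrightarrow> U k \<subseteq> {..<n} \<and> t \<le> card (U k)" and "0 < t"
    and d: "0 < d" "d \<le> 1" and \<epsilon>: "0 < \<epsilon>" "\<epsilon> \<le> d / 4"
    and L: "0 < L" "L \<le> 9 / 16 * d\<^sup>2 * t"
    and X: "X \<subseteq> U L" "d * card (U L) \<le> card X"
    and Y: "Y \<subseteq> U 0" "d * card (U 0) \<le> card Y"
  shows "3 / 4 * d * t * (9 / 16 * d\<^sup>2 * t - L) ^ L \<le> card (paths_between n E L X Y)"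
proof -
  define Z where "Z = dense_layers E U (d - \<epsilon>) Y"
  define S where "S m = (if m = 0 then X \<inter> Z L else Z (L - m))" for m
  have fin: "finite (U k) \<and> U k \<noteq> {}" if "k \<le> L" for k
    using U[OF that] \<open>0 < t\<close> finite_subset by fastforce
  have Z_sub: "Z k \<subseteq> U k" for k
    unfolding Z_def using dense_layers_subset Y(1) by blast
  have Z_card: "(if k = 0 then d else 1 - \<epsilon>) * card (U k) \<le> card (Z k)" if "k \<le> L" for k
    unfolding Z_def using chain fin d \<epsilon> Y that by (rule card_dense_layers)
  have Z_large: "3 / 4 * d * t \<le> card (Z k)" if "k \<le> L" for k
  proof -
    have "3 / 4 * d \<le> (if k = 0 then d else 1 - \<epsilon>)" using d \<epsilon> by auto
    then have "3 / 4 * d * t \<le> (if k = 0 then d else 1 - \<epsilon>) * card (U k)"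
      using U[OF that] d \<open>0 < t\<close> by (intro mult_mono) auto
    with Z_card[OF that] show ?thesis by linarith
  qed
  have S0: "3 / 4 * d * t \<le> card (S 0)"
  proof -
    have "card X + card (Z L) \<le> card (U L) + card (X \<inter> Z L)"
      using fin[of L] X(1) Z_sub[of L] by (intro card_Int_ge) auto
    then have "(d - \<epsilon>) * card (U L) \<le> card (X \<inter> Z L)"
      using X(2) Z_card[of L] \<open>0 < L\<close> by (simp add: algebra_simps)
    moreover have "3 / 4 * d * t \<le> (d - \<epsilon>) * card (U L)"
      using U[of L] d \<epsilon> \<open>0 < t\<close> by (intro mult_mono) auto
    ultimately show ?thesis unfolding S_def by simp
  qed
  have deg: "\<forall>k<L. \<forall>a\<in>S k. 9 / 16 * d\<^sup>2 * t \<le> card {y \<in> S (Suc k). E a y}"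
  proof (intro allI impI ballI)
    fix k a assume "k < L" "a \<in> S k"
    then have "a \<in> Z (Suc (L - Suc k))" unfolding S_def by (auto simp: Suc_diff_Suc split: if_splits)
    then have "(d - \<epsilon>) * card (S (Suc k)) \<le> card {y \<in> S (Suc k). E a y}"
      unfolding S_def Z_def by simp
    moreover have "9 / 16 * d\<^sup>2 * t \<le> (d - \<epsilon>) * card (S (Suc k))"
    proof -
      have "9 / 16 * d\<^sup>2 * t = 3 / 4 * d * (3 / 4 * d * t)" by (simp add: power2_eq_square)
      also have "\<dots> \<le> (d - \<epsilon>) * card (Z (L - Suc k))"
        using Z_large[of "L - Suc k"] d \<epsilon> \<open>0 < t\<close> by (intro mult_mono) auto
      finally show ?thesis unfolding S_def by simp
    qed
    ultimately show "9 / 16 * d\<^sup>2 * t \<le> card {y \<in> S (Suc k). E a y}" by linarith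
  qed
  have S_sub: "\<forall>k\<le>L. S k \<subseteq> {..<n}"
  proof (intro allI impI)
    fix k assume "k \<le> L"
    have "S k \<subseteq> Z (L - k)" unfolding S_def by auto
    also have "\<dots> \<subseteq> {..<n}" using Z_sub U[of "L - k"] by auto
    finally show "S k \<subseteq> {..<n}" .
  qed
  have "3 / 4 * d * t * (9 / 16 * d\<^sup>2 * t - L) ^ L \<le> card (S 0) * (9 / 16 * d\<^sup>2 * t - L) ^ L"
    using S0 L by (intro mult_right_mono) auto
  also have "\<dots> \<le> card (paths_between n E L X Y)"
    using S_sub deg L(2) by (rule card_paths_between_ge_layered) (use \<open>0 < L\<close> in \<open>auto simp: S_def Z_def\<close>)
  finally show ?thesis .
qed

lemma chain_path_count_ge_power:
  fixes d t :: real
  assumes d: "0 < d" "d \<le> 1" and "0 < r" and t: "8 * real r \<le> d\<^sup>2 * t"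
  shows "(d\<^sup>2 * t / 4) ^ (2 * r) \<le> 3 / 4 * d * t * (9 / 16 * d\<^sup>2 * t - real (2 * r - 1)) ^ (2 * r - 1)"
proof -
  have "0 < d\<^sup>2 * t" using t \<open>0 < r\<close> by (simp add: order_less_le_trans)
  then have "0 \<le> t" using d by (simp add: zero_less_mult_iff)
  have "d\<^sup>2 * t / 4 \<le> 3 / 4 * d * t"
    using d \<open>0 \<le> t\<close> by (simp add: power2_eq_square mult_right_mono mult_left_le_one_le)
  moreover have "d\<^sup>2 * t / 4 \<le> 9 / 16 * d\<^sup>2 * t - real (2 * r - 1)"
  proof -
    have "real (2 * r - 1) \<le> 2 * real r" by linarith
    with t show ?thesis by linarith
  qed
  ultimately have "d\<^sup>2 * t / 4 * (d\<^sup>2 * t / 4) ^ (2 * r - 1)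
      \<le> 3 / 4 * d * t * (9 / 16 * d\<^sup>2 * t - real (2 * r - 1)) ^ (2 * r - 1)"
    using \<open>0 \<le> t\<close> d by (intro mult_mono power_mono) auto
  moreover have "2 * r = Suc (2 * r - 1)" using \<open>0 < r\<close> by simp
  ultimately show ?thesis by (metis power_Suc)
qed

section \<open>Balanced partitions and the reduced graph\<close>

lemma card_balanced_partition_ge:
  assumes disj: "\<forall>i<r. \<forall>j<r. i \<noteq> j \<longrightarrow> V i \<inter> V j = {}" and cover: "(\<Union>i<r. V i) = {..<n}"
    and bal: "\<forall>i<r. \<forall>j<r. card (V i) \<le> card (V j) + 1" and "k < r" and "2 * r \<le> n"
  shows "real n / (2 * r) \<le> card (V k)"
proof -
  have "n = card (\<Union>i<r. V i)" using cover by simp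
  also have "\<dots> = (\<Sum>i<r. card (V i))"
    using cover disj by (intro card_UN_disjoint) (auto intro: finite_subset)
  also have "\<dots> \<le> (\<Sum>i<r. card (V k) + 1)"
    using bal \<open>k < r\<close> by (intro sum_mono) auto
  also have "\<dots> = r * (card (V k) + 1)" by simp
  finally have "real n \<le> r * (card (V k) + 1)" by (simp only: of_nat_le_iff)
  with \<open>2 * r \<le> n\<close> \<open>k < r\<close> show ?thesis by (simp add: field_simps)
qed

lemma card_paths_between_dense_subsets:
  fixes d \<epsilon> \<zeta> :: real
  assumes d: "0 < d" "d \<le> 1" and \<epsilon>: "0 < \<epsilon>" "\<epsilon> \<le> d / 4"
    and \<zeta>: "\<zeta> \<le> (d\<^sup>2 / (8 * real r)) ^ (2 * r)"
    and n: "2 * r \<le> n" "16 * real r ^ 2 \<le> d\<^sup>2 * n"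
    and G: "is_graph n E" and disj: "\<forall>i<r. \<forall>j<r. i \<noteq> j \<longrightarrow> V i \<inter> V j = {}"
    and cover: "(\<Union>i<r. V i) = {..<n}" and bal: "\<forall>i<r. \<forall>j<r. card (V i) \<le> card (V j) + 1"
    and conn: "connected_on r (reduced_graph E V r \<epsilon> d)"
    and nbip: "\<not> bipartite_on r (reduced_graph E V r \<epsilon> d)"
    and ij: "i < r" "j < r"
    and X: "X \<subseteq> V i" "d * card (V i) \<le> card X" and Y: "Y \<subseteq> V j" "d * card (V j) \<le> card Y"
  shows "\<zeta> * real n ^ (2 * r) \<le> card (paths_between n E (2 * r - 1) X Y)"
proof -
  let ?R = "reduced_graph E V r \<epsilon> d"
  define L where "L = 2 * r - 1"
  define t where "t = real n / (2 * r)"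
  have "0 < r" using ij by simp
  have "(?R ^^ L) j i"
    unfolding L_def using symp_reduced_graph[OF G] conn nbip ij
    by (intro walk_of_length_2r_minus_1) (auto simp: reduced_graph_def)
  then obtain f where f: "f 0 = j" "f L = i" and walk: "\<forall>k<L. ?R (f k) (f (Suc k))"
    unfolding relpowp_fun_conv by blast
  have f_lt: "f k < r" if "k \<le> L" for k
    using that walk f ij unfolding reduced_graph_def by (cases "k = L") auto
  have chain: "regular_pair E \<epsilon> (V (f (Suc k))) (V (f k)) \<and> d \<le> density E (V (f (Suc k))) (V (f k))"
    if "k < L" for k
    using that walk symp_reduced_graph[OF G] unfolding reduced_graph_def by (blast dest: sympD)
  have part: "V (f k) \<subseteq> {..<n} \<and> t \<le> card (V (f k))" if "k \<le> L" for k
  proof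
    show "V (f k) \<subseteq> {..<n}" using cover f_lt[OF that] by blast
    show "t \<le> card (V (f k))"
      unfolding t_def by (rule card_balanced_partition_ge[OF disj cover bal f_lt[OF that] n(1)])
  qed
  have "8 * real r \<le> d\<^sup>2 * t"
    using n(2) \<open>0 < r\<close> unfolding t_def by (simp add: field_simps power2_eq_square)
  have "\<zeta> * real n ^ (2 * r) \<le> (d\<^sup>2 * t / 4) ^ (2 * r)"
  proof -
    have "d\<^sup>2 / (8 * real r) * real n = d\<^sup>2 * t / 4" unfolding t_def by simp
    then show ?thesis using \<zeta> by (metis mult_right_mono power_mult_distrib zero_le_power of_nat_0_le_iff)
  qed
  also have "\<dots> \<le> 3 / 4 * d * t * (9 / 16 * d\<^sup>2 * t - L) ^ L"
    unfolding L_def using d \<open>0 < r\<close> \<open>8 * real r \<le> d\<^sup>2 * t\<close> by (rule chain_path_count_ge_power)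
  also have "\<dots> \<le> card (paths_between n E L X Y)"
  proof -
    have "0 < t" using \<open>0 < r\<close> n unfolding t_def by simp
    moreover have "0 < L" "L \<le> 9 / 16 * d\<^sup>2 * t"
      using \<open>0 < r\<close> \<open>8 * real r \<le> d\<^sup>2 * t\<close> unfolding L_def by auto
    moreover have "X \<subseteq> V (f L)" "d * card (V (f L)) \<le> card X"
      and "Y \<subseteq> V (f 0)" "d * card (V (f 0)) \<le> card Y"
      using X Y f by simp_all
    ultimately show ?thesis
      using chain part d \<epsilon> by (intro card_paths_between_regular_chain[where U = "\<lambda>k. V (f k)"]) simp_all
  qed
  finally show ?thesis unfolding L_def .
qed

lemma odd_paths_in_regular_partition:
  fixes d \<epsilon> \<zeta> :: real
  assumes d: "0 < d" "d \<le> 1" and \<epsilon>: "0 < \<epsilon>" "\<epsilon> \<le> d / 4"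
    and \<zeta>: "\<zeta> \<le> (d\<^sup>2 / (8 * real r)) ^ (2 * r)"
    and n: "2 * r + nat \<lceil>16 * real r ^ 2 / d\<^sup>2\<rceil> \<le> n"
    and G: "is_graph n E" and disj: "\<forall>i<r. \<forall>j<r. i \<noteq> j \<longrightarrow> V i \<inter> V j = {}"
    and cover: "(\<Union>i<r. V i) = {..<n}" and bal: "\<forall>i<r. \<forall>j<r. card (V i) \<le> card (V j) + 1"
    and conn: "connected_on r (reduced_graph E V r \<epsilon> d)"
    and nbip: "\<not> bipartite_on r (reduced_graph E V r \<epsilon> d)"
  shows "\<exists>L. odd L \<and> L \<le> 2 * r \<and>
    (\<forall>i<r. \<forall>j<r. \<forall>X Y. X \<subseteq> V i \<and> d * card (V i) \<le> card X \<and> Y \<subseteq> V j \<and> d * card (V j) \<le> card Y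
       \<longrightarrow> \<zeta> * real n ^ (L + 1) \<le> card (paths_between n E L X Y))"
proof (intro exI conjI allI impI)
  have "0 < r"
  proof (rule ccontr)
    assume "\<not> 0 < r"
    with nbip show False unfolding bipartite_on_def by simp
  qed
  then show "odd (2 * r - 1)" "2 * r - 1 \<le> 2 * r" by auto
  have "16 * real r ^ 2 / d\<^sup>2 \<le> real (nat \<lceil>16 * real r ^ 2 / d\<^sup>2\<rceil>)"
    by (rule real_nat_ceiling_ge)
  also have "\<dots> \<le> n" using n by linarith
  finally have n': "16 * real r ^ 2 \<le> d\<^sup>2 * n"
    using d pos_divide_le_eq[of "d\<^sup>2" "16 * real r ^ 2" n] by (simp add: ac_simps)
  have "2 * r \<le> n" using n by simp
  fix i j X Y
  assume "i < r" "j < r"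
    and XY: "X \<subseteq> V i \<and> d * card (V i) \<le> card X \<and> Y \<subseteq> V j \<and> d * card (V j) \<le> card Y"
  then have "\<zeta> * real n ^ (2 * r) \<le> card (paths_between n E (2 * r - 1) X Y)"
    using card_paths_between_dense_subsets[OF d \<epsilon> \<zeta> \<open>2 * r \<le> n\<close> n' G disj cover bal conn nbip]
    by blast
  then show "\<zeta> * real n ^ (2 * r - 1 + 1) \<le> card (paths_between n E (2 * r - 1) X Y)"
    using \<open>0 < r\<close> by simp
qed

theorem lemma2p12:
  "\<forall>d::real. 0 < d \<and> d \<le> 1 \<longrightarrow>
   (\<exists>\<epsilon>0>0. \<forall>\<epsilon>::real. 0 < \<epsilon> \<and> \<epsilon> \<le> \<epsilon>0 \<longrightarrow>
   (\<exists>r0::nat. \<forall>r\<ge>r0.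
   (\<exists>\<zeta>0>0. \<forall>\<zeta>::real. 0 < \<zeta> \<and> \<zeta> \<le> \<zeta>0 \<longrightarrow>
   (\<exists>n0::nat. \<forall>n\<ge>n0. \<forall>(E :: nat \<Rightarrow> nat \<Rightarrow> bool) (V :: nat \<Rightarrow> nat set).
      is_graph n E \<and>
      (\<forall>i<r. \<forall>j<r. i \<noteq> j \<longrightarrow> V i \<inter> V j = {}) \<and>
      (\<Union>i<r. V i) = {..<n} \<and>
      (\<forall>i<r. \<forall>j<r. card (V i) \<le> card (V j) + 1) \<and>
      connected_on r (reduced_graph E V r \<epsilon> d) \<and>
      \<not> bipartite_on r (reduced_graph E V r \<epsilon> d)
      \<longrightarrow>
      (\<exists>L::nat. odd L \<and> L \<le> 2 * r \<and>
        (\<forall>i<r. \<forall>j<r. \<forall>X Y. X \<subseteq> V i \<and> real (card X) \<ge> d * real (card (V i)) \<and>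
                            Y \<subseteq> V j \<and> real (card Y) \<ge> d * real (card (V j)) \<longrightarrow>
           real (card (paths_between n E L X Y)) \<ge> \<zeta> * real n ^ (L + 1)))))))"
  apply (intro allI impI)
  subgoal for d
    apply (rule exI[of _ "d / 4"], intro conjI allI impI)
     apply simp
    subgoal for \<epsilon>
      apply (rule exI[of _ 0], intro allI impI)
      subgoal for r
        apply (rule exI[of _ "(d\<^sup>2 / (8 * real r)) ^ (2 * r)"], intro conjI allI impI)
         apply (cases "r = 0"; simp)
        apply (rule exI[of _ "2 * r + nat \<lceil>16 * real r ^ 2 / d\<^sup>2\<rceil>"], intro allI impI)
        by (rule odd_paths_in_regular_partition) (elim conjE; assumption)+
      done
    done
  done

end
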